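(* Let $f:\mathbb{R}^d\to\mathbb{R}$ be measurable and bounded below with $\int_{\mathbb{R}^d}|f(x')|\varphi_{x,\tau}(x')\,dx'<\infty$ for all $x\in\mathbb{R}^d$, and let $\tau>0$. For $x,\tilde x\in\mathbb{R}^d$ define $$A^H(x,\tilde x) := \log\left(\int_{\mathbb{R}^d}\exp(f(x'))\,q_{\tilde x,\tau}(x')\,dx'\right) + D_{\mathrm{KL}}(\varphi_{x,\tau}\,\|\,q_{\tilde x,\tau}).$$ Then $A^H(x,x)=F^H_\tau(x)$ and $A^H(x,\tilde x)\ge F^H_\tau(x)$ for all $x,\tilde x\in\mathbb{R}^d$. Moreover, for each $\tilde x$, the minimizers of $x\mapsto A^H(x,\tilde x)$ coincide with the minimizers of $x\mapsto D_{\mathrm{KL}}(\varphi_{x,\tau}\|q_{\tilde x,\tau})$.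
   Context: $\varphi_{x,\tau}$ denotes the Gaussian density on $\mathbb{R}^d$ with mean $x$ and covariance $\tau I$. The heat regularization of $f$ is $F^H_\tau(x) := \int_{\mathbb{R}^d} f(x')\,\varphi_{x,\tau}(x')\,dx'$. For $x\in\mathbb{R}^d$, $\tau>0$, $q_{x,\tau}(x') := Z_{x,\tau}^{-1}\exp\left(-f(x') - \frac{1}{2\tau}|x-x'|^2\right)$, with $Z_{x,\tau}$ the normalizing constant. The Kullback–Leibler divergence is $D_{\mathrm{KL}}(p\|q) := \int_{\mathbb{R}^d}\log\left(\frac{p(x)}{q(x)}\right)p(x)\,dx$. *)

theory Defs
  imports "HOL-Analysis.Analysis"
begin

definition gauss :: "'a::euclidean_space \<Rightarrow> real \<Rightarrow> 'a \<Rightarrow> real" where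
  "gauss x \<tau> y = (2 * pi * \<tau>) powr (- real DIM('a) / 2) * exp (- (norm (y - x))\<^sup>2 / (2 * \<tau>))"

definition heat_reg :: "('a::euclidean_space \<Rightarrow> real) \<Rightarrow> real \<Rightarrow> 'a \<Rightarrow> real" where
  "heat_reg f \<tau> x = (\<integral> y. f y * gauss x \<tau> y \<partial>lborel)"

definition Zc :: "('a::euclidean_space \<Rightarrow> real) \<Rightarrow> 'a \<Rightarrow> real \<Rightarrow> real" where
  "Zc f x \<tau> = (\<integral> y. exp (- f y - (norm (x - y))\<^sup>2 / (2 * \<tau>)) \<partial>lborel)"

definition qdens :: "('a::euclidean_space \<Rightarrow> real) \<Rightarrow> 'a \<Rightarrow> real \<Rightarrow> 'a \<Rightarrow> real" where
  "qdens f x \<tau> y = exp (- f y - (norm (x - y))\<^sup>2 / (2 * \<tau>)) / Zc f x \<tau>"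

definition KL :: "('a::euclidean_space \<Rightarrow> real) \<Rightarrow> ('a \<Rightarrow> real) \<Rightarrow> real" where
  "KL p q = (\<integral> y. ln (p y / q y) * p y \<partial>lborel)"

definition AH :: "('a::euclidean_space \<Rightarrow> real) \<Rightarrow> real \<Rightarrow> 'a \<Rightarrow> 'a \<Rightarrow> real" where
  "AH f \<tau> x xt = ln (\<integral> y. exp (f y) * qdens f xt \<tau> y \<partial>lborel) + KL (gauss x \<tau>) (qdens f xt \<tau>)"

end

theory Submission
  imports Defs "HOL-Probability.Distributions"
begin

text \<open>
  Writing \<open>q\<^sub>x\<^sub>t(y) = exp(-f y - |xt - y|\<^sup>2/(2\<tau>)) / Z\<close>, the factor \<open>exp(f y)\<close> cancels in the first
  term of \<open>A\<^sup>H\<close>, which becomes \<open>ln((2\<pi>\<tau>)\<^bsup>d/2\<^esup>/Z)\<close>. In the KL term, expanding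
  \<open>|xt - y|\<^sup>2 = |xt - x|\<^sup>2 - 2(y - x)\<bullet>(xt - x) + |y - x|\<^sup>2\<close> and integrating against the Gaussian
  centred at \<open>x\<close> (mass one, vanishing first moment) leaves
  \<open>F\<^sup>H\<^sub>\<tau>(x) + |xt - x|\<^sup>2/(2\<tau>) - ln((2\<pi>\<tau>)\<^bsup>d/2\<^esup>/Z)\<close>. Hence
  \<open>A\<^sup>H(x, xt) = F\<^sup>H\<^sub>\<tau>(x) + |xt - x|\<^sup>2/(2\<tau>)\<close>, from which all three claims follow; the last one
  because the first term of \<open>A\<^sup>H\<close> does not depend on \<open>x\<close>.
\<close>

lemma norm_power2_eq_sum_Basis:
  "(norm (z::'a::euclidean_space))\<^sup>2 = (\<Sum>b\<in>Basis. (z \<bullet> b)\<^sup>2)"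
proof -
  have "(norm z)\<^sup>2 = (\<Sum>b\<in>Basis. (z \<bullet> b) * (z \<bullet> b))"
    by (simp add: power2_norm_eq_inner euclidean_inner[of z z])
  then show ?thesis by (simp add: power2_eq_square)
qed

lemma norm_diff_power2_expand:
  fixes x y z :: "'a::real_inner"
  shows "(norm (z - y))\<^sup>2 = (norm (z - x))\<^sup>2 - 2 * ((y - x) \<bullet> (z - x)) + (norm (y - x))\<^sup>2"
  by (simp add: power2_norm_eq_inner inner_diff_left inner_diff_right inner_commute algebra_simps)

lemma gauss_measurable [measurable]: "gauss x \<tau> \<in> borel_measurable borel"
  unfolding gauss_def[abs_def] by measurable

lemma gauss_pos: "\<tau> > 0 \<Longrightarrow> gauss x \<tau> y > 0"
  unfolding gauss_def by simp

lemma gauss_eq_prod_normal_density: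
  assumes "\<tau> > 0"
  shows "gauss x \<tau> (y::'a::euclidean_space) = (\<Prod>b\<in>Basis. normal_density (x\<bullet>b) (sqrt \<tau>) (y\<bullet>b))"
proof -
  have "(\<Prod>b\<in>Basis. normal_density (x\<bullet>b) (sqrt \<tau>) (y\<bullet>b))
     = (\<Prod>b\<in>(Basis::'a set). 1 / sqrt (2 * pi * \<tau>)) * (\<Prod>b\<in>Basis. exp (-(y\<bullet>b - x\<bullet>b)\<^sup>2 / (2 * \<tau>)))"
    unfolding prod.distrib[symmetric] using assms by (simp add: normal_density_def)
  also have "(\<Prod>b\<in>Basis. exp (-(y\<bullet>b - x\<bullet>b)\<^sup>2 / (2 * \<tau>)))
           = exp (\<Sum>b\<in>Basis. -(y\<bullet>b - x\<bullet>b)\<^sup>2 / (2 * \<tau>))"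
    by (simp add: exp_sum)
  also have "(\<Sum>b\<in>Basis. -(y\<bullet>b - x\<bullet>b)\<^sup>2 / (2 * \<tau>)) = - (norm (y - x))\<^sup>2 / (2 * \<tau>)"
    by (simp add: norm_power2_eq_sum_Basis[of "y - x"] sum_divide_distrib[symmetric] sum_negf
        inner_diff_left)
  also have "(\<Prod>b\<in>(Basis::'a set). 1 / sqrt (2 * pi * \<tau>)) = (2 * pi * \<tau>) powr (- real DIM('a) / 2)"
    using assms by (simp add: sqrt_def[symmetric] powr_half_sqrt[symmetric] powr_realpow[symmetric]
        powr_powr powr_minus_divide powr_divide)
  finally show ?thesis unfolding gauss_def by simp
qed

lemma has_bochner_integral_gauss:
  assumes "\<tau> > 0"
  shows "has_bochner_integral lborel (gauss x \<tau>) 1"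
proof (rule has_bochner_integral_nn_integral)
  have "(\<integral>\<^sup>+y. ennreal (gauss x \<tau> (y::'a)) \<partial>lborel)
      = (\<integral>\<^sup>+y. (\<Prod>b\<in>Basis. ennreal (normal_density (x\<bullet>b) (sqrt \<tau>) (y\<bullet>b))) \<partial>lborel)"
    using assms by (simp add: gauss_eq_prod_normal_density prod_ennreal)
  also have "\<dots> = (\<Prod>b\<in>(Basis::'a set). \<integral>\<^sup>+t. ennreal (normal_density (x\<bullet>b) (sqrt \<tau>) t) \<partial>lborel)"
    by (rule nn_integral_lborel_prod) auto
  also have "\<dots> = 1"
    using nn_integral_eq_integral[OF integrable_normal_density[of "sqrt \<tau>"]] assms
    by (intro prod.neutral) simp
  finally show "(\<integral>\<^sup>+y. ennreal (gauss x \<tau> y) \<partial>lborel) = ennreal 1" by simp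
qed (use assms gauss_pos in \<open>auto intro!: AE_I2 less_imp_le\<close>)

lemma integral_gauss: "\<tau> > 0 \<Longrightarrow> (\<integral>y. gauss x \<tau> y \<partial>lborel) = 1"
  using has_bochner_integral_gauss by (rule has_bochner_integral_integral_eq)

lemma integrable_gauss: "\<tau> > 0 \<Longrightarrow> integrable lborel (gauss x \<tau>)"
  using has_bochner_integral_gauss by (rule integrable.intros)

text \<open>The first moment is dominated by a Gaussian of twice the variance.\<close>

lemma mult_exp_neg_power2_le:
  assumes "\<tau> > 0" "r \<ge> 0"
  shows "r * exp (- r\<^sup>2 / (2 * \<tau>)) \<le> sqrt \<tau> * exp (- r\<^sup>2 / (4 * \<tau>))"
proof -
  define s where "s = sqrt \<tau>"
  have s: "s > 0" "s\<^sup>2 = \<tau>" using assms by (auto simp: s_def)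
  have "r \<le> s + r\<^sup>2 / (4 * s)"
  proof -
    have "0 \<le> (2 * s - r)\<^sup>2 / (4 * s)" using s by simp
    also have "\<dots> = s + r\<^sup>2 / (4 * s) - r"
      using s by (simp add: field_simps power2_eq_square)
    finally show ?thesis by simp
  qed
  also have "s + r\<^sup>2 / (4 * s) = s * (1 + r\<^sup>2 / (4 * \<tau>))"
    using s assms(1) by (simp add: field_simps power2_eq_square)
  also have "\<dots> \<le> s * exp (r\<^sup>2 / (4 * \<tau>))"
    using s by (intro mult_left_mono) (auto intro: exp_ge_add_one_self)
  finally have "r * exp (- r\<^sup>2 / (2 * \<tau>)) \<le> s * exp (r\<^sup>2 / (4 * \<tau>)) * exp (- r\<^sup>2 / (2 * \<tau>))"
    by (intro mult_right_mono) auto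
  also have "\<dots> = s * exp (- r\<^sup>2 / (4 * \<tau>))"
    using assms by (simp add: mult.assoc exp_add[symmetric] field_simps)
  finally show ?thesis by (simp add: s_def)
qed

lemma integrable_gauss_mult_inner:
  assumes "\<tau> > 0"
  shows "integrable lborel (\<lambda>y::'a::euclidean_space. gauss x \<tau> y * ((y - x) \<bullet> v))"
proof (rule Bochner_Integration.integrable_bound)
  define C1 where "C1 = (2 * pi * \<tau>) powr (- real DIM('a) / 2)"
  define C2 where "C2 = (2 * pi * (2 * \<tau>)) powr (- real DIM('a) / 2)"
  define K where "K = norm v * sqrt \<tau> * C1 / C2"
  have C: "C1 > 0" "C2 > 0" using assms by (auto simp: C1_def C2_def)
  show "integrable lborel (\<lambda>y. K * gauss x (2 * \<tau>) y)"
    using integrable_gauss[of "2 * \<tau>" x] assms by simp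
  show "AE y in lborel. norm (gauss x \<tau> y * ((y - x) \<bullet> v)) \<le> norm (K * gauss x (2 * \<tau>) y)"
  proof (rule AE_I2)
    fix y :: 'a
    define r where "r = norm (y - x)"
    have "norm (gauss x \<tau> y * ((y - x) \<bullet> v)) = C1 * exp (- r\<^sup>2 / (2 * \<tau>)) * \<bar>(y - x) \<bullet> v\<bar>"
      using C by (simp add: gauss_def C1_def r_def abs_mult)
    also have "\<dots> \<le> C1 * norm v * (r * exp (- r\<^sup>2 / (2 * \<tau>)))"
      using Cauchy_Schwarz_ineq2[of "y - x" v] C
      by (simp add: r_def mult.commute mult.left_commute mult_left_mono)
    also have "\<dots> \<le> C1 * norm v * (sqrt \<tau> * exp (- r\<^sup>2 / (4 * \<tau>)))"
      by (intro mult_left_mono mult_exp_neg_power2_le) (use C assms in \<open>auto simp: r_def\<close>)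
    also have "\<dots> = K * gauss x (2 * \<tau>) y"
      using C by (simp add: K_def gauss_def C2_def r_def field_simps)
    finally show "norm (gauss x \<tau> y * ((y - x) \<bullet> v)) \<le> norm (K * gauss x (2 * \<tau>) y)"
      by simp
  qed
qed measurable

text \<open>The reflection \<open>y \<mapsto> 2x - y\<close> preserves Lebesgue measure and the Gaussian, and negates the integrand.\<close>

lemma integral_gauss_mult_inner:
  assumes "\<tau> > 0"
  shows "(\<integral>y. gauss x \<tau> y * ((y - x) \<bullet> v) \<partial>lborel) = (0::real)"
proof -
  let ?h = "\<lambda>y::'a. gauss x \<tau> y * ((y - x) \<bullet> v)"
  let ?T = "\<lambda>z::'a. 2 *\<^sub>R x - z"
  have "distr lborel borel (\<lambda>z::'a. 2 *\<^sub>R x + (-1::real) *\<^sub>R z) = lborel"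
    using lborel_affine[of "-1::real" "2 *\<^sub>R x"] by (simp add: density_1)
  then have reflect: "distr lborel borel ?T = lborel" by simp
  have "(\<integral>y. ?h y \<partial>lborel) = (\<integral>y. ?h y \<partial>distr lborel borel ?T)"
    by (simp only: reflect)
  also have "\<dots> = (\<integral>z. ?h (?T z) \<partial>lborel)"
    by (rule integral_distr) measurable
  also have "\<dots> = (\<integral>z. - ?h z \<partial>lborel)"
  proof (rule Bochner_Integration.integral_cong[OF refl])
    fix z :: 'a
    have T: "?T z - x = - (z - x)" by (simp add: algebra_simps scaleR_2)
    then have "gauss x \<tau> (?T z) = gauss x \<tau> z"
      unfolding gauss_def by (simp only: norm_minus_cancel)
    then show "?h (?T z) = - ?h z"
      unfolding T by (simp add: inner_diff_left algebra_simps)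
  qed
  finally show ?thesis by simp
qed

lemma integrable_Zc_integrand:
  fixes f :: "'a::euclidean_space \<Rightarrow> real"
  assumes [measurable]: "f \<in> borel_measurable borel"
    and bdd: "\<And>y. c \<le> f y"
    and "\<tau> > 0"
  shows "integrable lborel (\<lambda>y. exp (- f y - (norm (x - y))\<^sup>2 / (2 * \<tau>)))"
proof (rule Bochner_Integration.integrable_bound)
  define C where "C = (2 * pi * \<tau>) powr (- real DIM('a) / 2)"
  have "C > 0" using \<open>\<tau> > 0\<close> by (simp add: C_def)
  show "integrable lborel (\<lambda>y. exp (- c) / C * gauss x \<tau> y)"
    using \<open>\<tau> > 0\<close> by (intro integrable_mult_right integrable_gauss)
  show "AE y in lborel. norm (exp (- f y - (norm (x - y))\<^sup>2 / (2 * \<tau>)))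
                          \<le> norm (exp (- c) / C * gauss x \<tau> y)"
  proof (rule AE_I2)
    fix y
    let ?E = "exp (- (norm (x - y))\<^sup>2 / (2 * \<tau>))"
    have "exp (- f y - (norm (x - y))\<^sup>2 / (2 * \<tau>)) = exp (- f y) * ?E"
      by (simp add: exp_add[symmetric])
    also have "\<dots> \<le> exp (- c) * ?E"
      using bdd[of y] by (intro mult_right_mono) auto
    also have "\<dots> = exp (- c) / C * gauss x \<tau> y"
      using \<open>C > 0\<close> by (simp add: gauss_def C_def norm_minus_commute)
    finally show "norm (exp (- f y - (norm (x - y))\<^sup>2 / (2 * \<tau>)))
                \<le> norm (exp (- c) / C * gauss x \<tau> y)"
      using \<open>C > 0\<close> gauss_pos[OF \<open>\<tau> > 0\<close>, of x y] by simp
  qed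
qed measurable

lemma Zc_pos:
  fixes f :: "'a::euclidean_space \<Rightarrow> real"
  assumes "f \<in> borel_measurable borel" "\<And>y. c \<le> f y" "\<tau> > 0"
  shows "Zc f x \<tau> > 0"
proof -
  let ?g = "\<lambda>y. exp (- f y - (norm (x - y))\<^sup>2 / (2 * \<tau>))"
  have int: "integrable lborel ?g"
    by (rule integrable_Zc_integrand[OF assms])
  have "Zc f x \<tau> \<ge> 0"
    unfolding Zc_def by (rule integral_nonneg_AE) simp
  moreover have "Zc f x \<tau> \<noteq> 0"
  proof
    assume "Zc f x \<tau> = 0"
    then have "AE y in lborel. ?g y = 0"
      unfolding Zc_def using integral_nonneg_eq_0_iff_AE[OF int] by simp
    then have "AE (y::'a) in lborel. False" by simp
    then show False by (subst (asm) AE_iff_measurable[where N = UNIV]) auto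
  qed
  ultimately show ?thesis by simp
qed

lemma integral_exp_mult_qdens:
  fixes f :: "'a::euclidean_space \<Rightarrow> real"
  assumes "\<tau> > 0"
  shows "(\<integral>y. exp (f y) * qdens f xt \<tau> y \<partial>lborel)
       = (2 * pi * \<tau>) powr (real DIM('a) / 2) / Zc f xt \<tau>"
proof -
  define C where "C = (2 * pi * \<tau>) powr (- real DIM('a) / 2)"
  have "C > 0" using assms by (simp add: C_def)
  have "exp (f y) * qdens f xt \<tau> y = gauss xt \<tau> y / (C * Zc f xt \<tau>)" for y
    using \<open>C > 0\<close>
    by (simp add: qdens_def gauss_def C_def norm_minus_commute exp_add[symmetric])
  then have "(\<integral>y. exp (f y) * qdens f xt \<tau> y \<partial>lborel) = 1 / (C * Zc f xt \<tau>)"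
    using integral_gauss[OF assms, of xt] by simp
  then show ?thesis
    using assms by (simp add: C_def powr_minus_divide divide_simps)
qed

lemma ln_gauss_div_qdens:
  fixes f :: "'a::euclidean_space \<Rightarrow> real"
  assumes "\<tau> > 0" "Zc f xt \<tau> > 0"
  shows "ln (gauss x \<tau> y / qdens f xt \<tau> y)
       = f y + (norm (xt - x))\<^sup>2 / (2 * \<tau>) - ((y - x) \<bullet> (xt - x)) / \<tau>
         - ln ((2 * pi * \<tau>) powr (real DIM('a) / 2) / Zc f xt \<tau>)"
proof -
  have "ln (gauss x \<tau> y / qdens f xt \<tau> y)
      = - real DIM('a) / 2 * ln (2 * pi * \<tau>) - (norm (y - x))\<^sup>2 / (2 * \<tau>)
        + ln (Zc f xt \<tau>) + f y + (norm (xt - y))\<^sup>2 / (2 * \<tau>)"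
    using assms by (simp add: gauss_def qdens_def ln_mult ln_div ln_powr)
  also have "\<dots> = f y + (norm (xt - x))\<^sup>2 / (2 * \<tau>) - ((y - x) \<bullet> (xt - x)) / \<tau>
         - ln ((2 * pi * \<tau>) powr (real DIM('a) / 2) / Zc f xt \<tau>)"
    using assms unfolding norm_diff_power2_expand[of xt y x]
    by (simp add: ln_div ln_powr field_simps)
  finally show ?thesis .
qed

lemma KL_gauss_qdens:
  fixes f :: "'a::euclidean_space \<Rightarrow> real"
  assumes [measurable]: "f \<in> borel_measurable borel"
    and bdd: "\<And>y. c \<le> f y"
    and int: "(\<integral>\<^sup>+ y. ennreal (\<bar>f y\<bar> * gauss x \<tau> y) \<partial>lborel) < \<infinity>"
    and tau: "\<tau> > 0"
  shows "KL (gauss x \<tau>) (qdens f xt \<tau>)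
       = heat_reg f \<tau> x + (norm (xt - x))\<^sup>2 / (2 * \<tau>)
         - ln ((2 * pi * \<tau>) powr (real DIM('a) / 2) / Zc f xt \<tau>)"
proof -
  define K where "K = (norm (xt - x))\<^sup>2 / (2 * \<tau>) - ln ((2 * pi * \<tau>) powr (real DIM('a) / 2) / Zc f xt \<tau>)"
  let ?g = "gauss x \<tau>"
  have "ln (?g y / qdens f xt \<tau> y) * ?g y
      = f y * ?g y + K * ?g y - ?g y * ((y - x) \<bullet> (xt - x)) / \<tau>" for y
  proof -
    have L: "ln (?g y / qdens f xt \<tau> y) = f y + K - ((y - x) \<bullet> (xt - x)) / \<tau>"
      using ln_gauss_div_qdens[OF tau Zc_pos[OF assms(1) bdd tau]] by (simp add: K_def)
    show ?thesis unfolding L by (simp add: algebra_simps)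
  qed
  then have "KL ?g (qdens f xt \<tau>)
      = (\<integral>y. f y * ?g y + K * ?g y - ?g y * ((y - x) \<bullet> (xt - x)) / \<tau> \<partial>lborel)"
    unfolding KL_def by simp
  also have "\<dots> = heat_reg f \<tau> x + K"
  proof -
    have "integrable lborel (\<lambda>y. f y * ?g y)"
    proof (rule integrableI_bounded)
      have "(\<integral>\<^sup>+ y. ennreal (norm (f y * ?g y)) \<partial>lborel) = (\<integral>\<^sup>+ y. ennreal (\<bar>f y\<bar> * ?g y) \<partial>lborel)"
        by (intro nn_integral_cong) (simp add: abs_mult abs_of_pos gauss_pos[OF tau])
      then show "(\<integral>\<^sup>+ y. ennreal (norm (f y * ?g y)) \<partial>lborel) < \<infinity>"
        using int by simp
    qed measurable
    moreover have "integrable lborel (\<lambda>y. ?g y * ((y - x) \<bullet> (xt - x)) / \<tau>)"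
      using integrable_gauss_mult_inner[OF tau] by (rule integrable_divide)
    moreover have "integrable lborel (\<lambda>y. K * ?g y)"
      using integrable_gauss[OF tau] by (rule integrable_mult_right)
    ultimately show ?thesis
      using integral_gauss[OF tau, of x] integral_gauss_mult_inner[OF tau, of x "xt - x"]
      by (simp add: heat_reg_def Bochner_Integration.integral_add Bochner_Integration.integral_diff)
  qed
  finally show ?thesis by (simp add: K_def)
qed

lemma AH_eq_heat_reg_plus_dist:
  fixes f :: "'a::euclidean_space \<Rightarrow> real"
  assumes "f \<in> borel_measurable borel" "\<And>y. c \<le> f y"
    and "(\<integral>\<^sup>+ y. ennreal (\<bar>f y\<bar> * gauss x \<tau> y) \<partial>lborel) < \<infinity>" "\<tau> > 0"
  shows "AH f \<tau> x xt = heat_reg f \<tau> x + (norm (xt - x))\<^sup>2 / (2 * \<tau>)"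
  unfolding AH_def integral_exp_mult_qdens[OF \<open>\<tau> > 0\<close>] KL_gauss_qdens[OF assms] by simp

theorem mainTheorem6:
  fixes f :: "'a::euclidean_space \<Rightarrow> real" and \<tau> :: real
  assumes meas: "f \<in> borel_measurable borel"
    and bdd: "\<exists>c. \<forall>y. c \<le> f y"
    and int: "\<And>x. (\<integral>\<^sup>+ y. ennreal (\<bar>f y\<bar> * gauss x \<tau> y) \<partial>lborel) < \<infinity>"
    and tau: "\<tau> > 0"
  shows "(\<forall>x. AH f \<tau> x x = heat_reg f \<tau> x)
       \<and> (\<forall>x xt. AH f \<tau> x xt \<ge> heat_reg f \<tau> x)
       \<and> (\<forall>xt. {x. \<forall>y. AH f \<tau> x xt \<le> AH f \<tau> y xt}
               = {x. \<forall>y. KL (gauss x \<tau>) (qdens f xt \<tau>) \<le> KL (gauss y \<tau>) (qdens f xt \<tau>)})"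
proof -
  obtain c where c: "\<And>y. c \<le> f y" using bdd by blast
  have AH: "AH f \<tau> x xt = heat_reg f \<tau> x + (norm (xt - x))\<^sup>2 / (2 * \<tau>)" for x xt
    by (rule AH_eq_heat_reg_plus_dist[OF meas c int tau])
  have "AH f \<tau> x x = heat_reg f \<tau> x" "AH f \<tau> x xt \<ge> heat_reg f \<tau> x" for x xt
    using tau by (simp_all add: AH)
  then show ?thesis by (simp add: AH_def)
qed

end
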